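(* Consider one step $i$ of a memory-augmented recurrent neural network with vanilla (linear-activation) transition, in which the previous hidden state $\bm h_{i-1}$ and the current input $\bm x_i$ are held fixed. The hidden state is $\bm h_i = W \bm h_{i-1} + U \bm x_i + W_{(c)} \bm c + \bm b \in \mathbb{R}^D$, where $\bm c \in \mathbb{R}^d$ is the memory content retrieved from a key-value memory bank with $N$ slots: $\widetilde\alpha_j = \exp\{\bm h_{i-1}^\top \bm m_j^{(\mathrm{key})}\}$, $\alpha_j = \widetilde\alpha_j / \sum_{j'=1}^N \widetilde\alpha_{j'}$, and $\bm c = \sum_{j=1}^N \alpha_j \bm m_j^{(\mathrm{val})}$, with $\bm m_j^{(\mathrm{val})}\in\mathbb{R}^d$. Compare two ways of increasing model capacity: (i) Memory expansion: $M$ new slots $j=N+1,\dots,N+M$ (with keys and values $\bm m_j^{(\mathrm{val})}\in\mathbb{R}^d$) are added, the attention becomes $\alpha'_j = \widetilde\alpha_j / \sum_{j'=1}^{N+M}\widetilde\alpha_{j'}$ for $1\le j\le N+M$, the content becomes $\bm c' = \sum_{j=1}^{N+M}\alpha'_j \bm m_j^{(\mathrm{val})}$, and all other quantities are unchanged, giving $\bm h_i^{(m)} = W \bm h_{i-1} + U \bm x_i + W_{(c)} \bm c' + \bm b$. (ii) Hidden-state expansion: $d$ new hidden units are added, with values $\widetilde{\bm h}_{i-1}\in\mathbb{R}^d$ at step $i-1$, connected to the original $D$ dimensions by new weights $\widetilde W\in\mathbb{R}^{D\times d}$; the original $D$ dimensions of the new hidden state at step $i$ are $\bm h_i^{(s)}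 = \bm h_i + \widetilde W \widetilde{\bm h}_{i-1}$. Suppose that, for the given data point, the unnormalized attention weights satisfy $\sum_{j=N+1}^{N+M}\widetilde\alpha_j \le \sum_{j=1}^{N}\widetilde\alpha_j$. Then $$\mathbb{E}\left[\|\bm h_i^{(m)}-\bm h_i\|^2\right] \le \mathbb{E}\left[\|\bm h_i^{(s)}-\bm h_i\|^2\right],$$ where the expectation is computed by assuming the weights and hidden states (the entries of $\widetilde W$, $\widetilde{\bm h}_{i-1}$, $W_{(c)}$, and all memory value vectors $\bm m_j^{(\mathrm{val})}$, $1\le j\le N+M$) are i.i.d. from a zero-mean Gaussian distribution with variance $\sigma^2$ (independent of the attention weights).
   Context: This is a simplified model of a recurrent neural network augmented with a key-value memory bank retrieved by softmax attention, used to compare the perturbation of the original $D$ hidden dimensions caused by adding memory slots versus adding hidden units. The attention weights $\widetilde\alpha_j$ for a given data point are treated as fixed (they depend on the keys and on $\bm h_{i-1}$, which is fixed), while the randomness is over the weights, the newly added hidden units, and the memory value entries, all i.i.d. zero-mean Gaussian with variance $\sigma^2$. *)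

theory Defs
  imports "HOL-Probability.Probability"
begin

text \<open>Vectors in R^n are functions nat => real read on indices < n; matrices are
  nat => nat => real read on indices (row < rows, col < cols). Indices are 0-based:
  original memory slots are j < N, new slots are N <= j < N + M.\<close>

definition matvec :: "nat \<Rightarrow> (nat \<Rightarrow> nat \<Rightarrow> real) \<Rightarrow> (nat \<Rightarrow> real) \<Rightarrow> nat \<Rightarrow> real" where
  "matvec ncols A v = (\<lambda>i. \<Sum>k<ncols. A i k * v k)"

definition sqnorm :: "nat \<Rightarrow> (nat \<Rightarrow> real) \<Rightarrow> real" where
  "sqnorm n v = (\<Sum>i<n. (v i)\<^sup>2)"

definition attn_tilde :: "nat \<Rightarrow> (nat \<Rightarrow> real) \<Rightarrow> (nat \<Rightarrow> nat \<Rightarrow> real) \<Rightarrow> nat \<Rightarrow> real" where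
  "attn_tilde D hprev key j = exp (\<Sum>k<D. hprev k * key j k)"

definition content :: "nat \<Rightarrow> (nat \<Rightarrow> real) \<Rightarrow> (nat \<Rightarrow> nat \<Rightarrow> real) \<Rightarrow> nat \<Rightarrow> real" where
  "content K atil mval = (\<lambda>k. \<Sum>j<K. (atil j / (\<Sum>j'<K. atil j')) * mval j k)"

definition hidden :: "nat \<Rightarrow> nat \<Rightarrow> nat \<Rightarrow> (nat \<Rightarrow> nat \<Rightarrow> real) \<Rightarrow> (nat \<Rightarrow> nat \<Rightarrow> real)
    \<Rightarrow> (nat \<Rightarrow> nat \<Rightarrow> real) \<Rightarrow> (nat \<Rightarrow> real) \<Rightarrow> (nat \<Rightarrow> real) \<Rightarrow> (nat \<Rightarrow> real)
    \<Rightarrow> (nat \<Rightarrow> real) \<Rightarrow> nat \<Rightarrow> real" where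
  "hidden D p d W U Wc b hprev x c =
     (\<lambda>i. matvec D W hprev i + matvec p U x i + matvec d Wc c i + b i)"

text \<open>The random quantities: entries of W_(c) (D x d), memory values m_j^val (j < K, d entries),
  entries of W-tilde (D x d) and of h-tilde_{i-1} (d entries).\<close>
datatype rvar = RWc nat nat | RMv nat nat | RWt nat nat | RHt nat

definition rvars :: "nat \<Rightarrow> nat \<Rightarrow> nat \<Rightarrow> rvar set" where
  "rvars D d K =
     {RWc a b | a b. a < D \<and> b < d} \<union> {RMv j b | j b. j < K \<and> b < d}
     \<union> {RWt a b | a b. a < D \<and> b < d} \<union> {RHt b | b. b < d}"

definition gauss_space :: "real \<Rightarrow> rvar set \<Rightarrow> (rvar \<Rightarrow> real) measure" where
  "gauss_space \<sigma> I = PiM I (\<lambda>_. density lborel (normal_density 0 \<sigma>))"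

end

theory Submission
  imports Defs
begin

text \<open>Both perturbations of the original \<open>D\<close> coordinates are, row by row, bilinear forms
  \<open>\<Sum>\<^sub>a c\<^sub>a X\<^sub>a Y\<^sub>a\<close> in independent centred Gaussians, where no \<open>X\<close>-variable is a \<open>Y\<close>-variable
  and the pairs \<open>(X\<^sub>a, Y\<^sub>a)\<close> are distinct. Expanding the square, only the diagonal terms survive,
  so the expected squared norm is \<open>D \<sigma>\<^sup>4 \<Sum>\<^sub>a c\<^sub>a\<^sup>2\<close>. For hidden-state expansion
  (row \<open>\<Sum>\<^sub>k W\<^sub>t[i,k] h\<^sub>t[k]\<close>) this gives \<open>D d \<sigma>\<^sup>4\<close>; for memory expansion
  (row \<open>\<Sum>\<^sub>k \<Sum>\<^sub>j (\<alpha>'\<^sub>j - \<alpha>\<^sub>j) W\<^sub>c[i,k] m\<^sub>j[k]\<close>) it gives \<open>D d \<sigma>\<^sup>4 \<Sum>\<^sub>j (\<alpha>'\<^sub>j - \<alpha>\<^sub>j)\<^sup>2\<close>.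
  If the new slots carry attention mass \<open>T\<close> at most the old mass \<open>S\<close>, the attention vector moves
  by \<open>\<Sum>\<^sub>j (\<alpha>'\<^sub>j - \<alpha>\<^sub>j)\<^sup>2 \<le> 2 (T / (S + T))\<^sup>2 \<le> 1/2\<close>.\<close>

abbreviation normal_measure :: "real \<Rightarrow> real measure" where
  "normal_measure \<sigma> \<equiv> density lborel (normal_density 0 \<sigma>)"

lemma integrable_normal_measure_power:
  assumes "\<sigma> > 0"
  shows "integrable (normal_measure \<sigma>) (\<lambda>x. x ^ k)"
  using integrable_normal_moment[OF assms, of 0 k] by (subst integrable_density) auto

lemma integral_normal_measure_power:
  "(\<integral>x. x ^ k \<partial>normal_measure \<sigma>) = (\<integral>x. normal_density 0 \<sigma> x * x ^ k \<partial>lborel)"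
  by (subst integral_density) auto

lemma normal_measure_moments:
  assumes "\<sigma> > 0"
  shows "(\<integral>x. x ^ 0 \<partial>normal_measure \<sigma>) = 1"
    and "(\<integral>x. x ^ 1 \<partial>normal_measure \<sigma>) = 0"
    and "(\<integral>x. x ^ 2 \<partial>normal_measure \<sigma>) = \<sigma>\<^sup>2"
  unfolding integral_normal_measure_power
  using integral_normal_density[OF assms, of 0] integral_normal_moment_odd[OF assms, of 0 0]
    integral_normal_moment_even[OF assms, of 0 1] assms
  by (simp_all add: fact_numeral)

lemma prod_power_indicator:
  assumes "finite I" "u \<in> I"
  shows "(\<Prod>i\<in>I. (f i :: real) ^ (if i = u then 1 else 0)) = f u"
proof -
  have "(\<Prod>i\<in>I. f i ^ (if i = u then 1 else 0)) = (\<Prod>i\<in>I. if i = u then f i else 1)"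
    by (intro prod.cong) auto
  also have "\<dots> = f u" using assms by (simp add: prod.delta)
  finally show ?thesis .
qed

lemma integral_PiM_normal_four_product:
  fixes I :: "'i set"
  assumes \<sigma>: "\<sigma> > 0" and fin: "finite I" and mem: "u \<in> I" "v \<in> I" "w \<in> I" "z \<in> I"
    and disjoint: "u \<noteq> w" "u \<noteq> z" "v \<noteq> w" "v \<noteq> z"
  shows "integrable (PiM I (\<lambda>_. normal_measure \<sigma>)) (\<lambda>\<omega>. \<omega> u * \<omega> v * \<omega> w * \<omega> z)"
    and "(\<integral>\<omega>. \<omega> u * \<omega> v * \<omega> w * \<omega> z \<partial>PiM I (\<lambda>_. normal_measure \<sigma>))
         = (if u = v then \<sigma>\<^sup>2 else 0) * (if w = z then \<sigma>\<^sup>2 else 0)"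
proof -
  interpret product_sigma_finite "\<lambda>_::'i. normal_measure \<sigma>"
    using prob_space_normal_density[OF \<sigma>]
    by (simp add: product_sigma_finite_def prob_space_imp_sigma_finite)
  define n where "n i = (if i = u then 1 else 0) + (if i = v then 1 else 0)
     + (if i = w then 1 else 0) + ((if i = z then 1 else 0)::nat)" for i
  have monomial: "(\<Prod>i\<in>I. \<omega> i ^ n i) = \<omega> u * \<omega> v * \<omega> w * \<omega> z" for \<omega> :: "'i \<Rightarrow> real"
    unfolding n_def power_add prod.distrib using fin mem by (simp add: prod_power_indicator)
  have integrable: "\<And>i. i \<in> I \<Longrightarrow> integrable (normal_measure \<sigma>) (\<lambda>x. x ^ n i)"
    using integrable_normal_measure_power[OF \<sigma>] by blast
  show "integrable (PiM I (\<lambda>_. normal_measure \<sigma>)) (\<lambda>\<omega>. \<omega> u * \<omega> v * \<omega> w * \<omega> z)"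
    using product_integrable_prod[of I "\<lambda>i x. x ^ n i", OF fin integrable] by (simp add: monomial)
  have "(\<integral>\<omega>. \<omega> u * \<omega> v * \<omega> w * \<omega> z \<partial>PiM I (\<lambda>_. normal_measure \<sigma>))
      = (\<Prod>i\<in>I. (\<integral>x. x ^ n i \<partial>normal_measure \<sigma>))"
    using product_integral_prod[of I "\<lambda>i x. x ^ n i", OF fin integrable] by (simp add: monomial)
  also have "\<dots> = (if u = v then \<sigma>\<^sup>2 else 0) * (if w = z then \<sigma>\<^sup>2 else 0)"
  proof (cases "u = v \<and> w = z")
    case True
    have "w \<in> I - {u}" using mem disjoint by auto
    then have "(\<Prod>i\<in>I. (\<integral>x. x ^ n i \<partial>normal_measure \<sigma>)) = (\<integral>x. x ^ n u \<partial>normal_measure \<sigma>) *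
       ((\<integral>x. x ^ n w \<partial>normal_measure \<sigma>) * (\<Prod>i\<in>I - {u} - {w}. (\<integral>x. x ^ n i \<partial>normal_measure \<sigma>)))"
      using fin mem by (simp add: prod.remove[of I u] prod.remove[of "I - {u}" w])
    also have "(\<Prod>i\<in>I - {u} - {w}. (\<integral>x. x ^ n i \<partial>normal_measure \<sigma>)) = 1"
      using True normal_measure_moments(1)[OF \<sigma>] by (intro prod.neutral) (auto simp: n_def)
    moreover have "n u = 2" "n w = 2" using True disjoint by (auto simp: n_def)
    ultimately show ?thesis using True normal_measure_moments(3)[OF \<sigma>] by simp
  next
    case False
    \<comment> \<open>some variable then occurs exactly once, and its first moment vanishes\<close>
    then obtain y where "y \<in> I" "n y = 1"
      using disjoint mem by (auto simp: n_def)
    then have "(\<Prod>i\<in>I. (\<integral>x. x ^ n i \<partial>normal_measure \<sigma>)) = 0"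
      using fin normal_measure_moments(2)[OF \<sigma>] by (intro prod_zero bexI[of _ y]) auto
    then show ?thesis using False by auto
  qed
  finally show "(\<integral>\<omega>. \<omega> u * \<omega> v * \<omega> w * \<omega> z \<partial>PiM I (\<lambda>_. normal_measure \<sigma>))
         = (if u = v then \<sigma>\<^sup>2 else 0) * (if w = z then \<sigma>\<^sup>2 else 0)" .
qed

lemma integral_PiM_normal_bilinear_square:
  fixes I :: "'i set" and A :: "'a set" and p q :: "'a \<Rightarrow> 'i" and c :: "'a \<Rightarrow> real"
  assumes \<sigma>: "\<sigma> > 0" and fin: "finite I" and finA: "finite A"
    and mem: "\<And>a. a \<in> A \<Longrightarrow> p a \<in> I" "\<And>a. a \<in> A \<Longrightarrow> q a \<in> I"
    and disjoint: "\<And>a b. a \<in> A \<Longrightarrow> b \<in> A \<Longrightarrow> p a \<noteq> q b"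
    and inj: "inj_on (\<lambda>a. (p a, q a)) A"
  shows "integrable (PiM I (\<lambda>_. normal_measure \<sigma>)) (\<lambda>\<omega>. (\<Sum>a\<in>A. c a * (\<omega> (p a) * \<omega> (q a)))\<^sup>2)"
    and "(\<integral>\<omega>. (\<Sum>a\<in>A. c a * (\<omega> (p a) * \<omega> (q a)))\<^sup>2 \<partial>PiM I (\<lambda>_. normal_measure \<sigma>))
         = \<sigma>^4 * (\<Sum>a\<in>A. (c a)\<^sup>2)"
proof -
  let ?P = "PiM I (\<lambda>_. normal_measure \<sigma>)"
  have expand: "(\<Sum>a\<in>A. c a * (\<omega> (p a) * \<omega> (q a)))\<^sup>2 =
     (\<Sum>a\<in>A. \<Sum>b\<in>A. c a * c b * (\<omega> (p a) * \<omega> (p b) * \<omega> (q a) * \<omega> (q b)))" for \<omega> :: "'i \<Rightarrow> real"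
    by (simp add: power2_eq_square sum_product algebra_simps)
  have term_integrable: "integrable ?P (\<lambda>\<omega>. \<omega> (p a) * \<omega> (p b) * \<omega> (q a) * \<omega> (q b))"
   and term_integral: "(\<integral>\<omega>. \<omega> (p a) * \<omega> (p b) * \<omega> (q a) * \<omega> (q b) \<partial>?P) = (if a = b then \<sigma>^4 else 0)"
    if "a \<in> A" "b \<in> A" for a b
  proof -
    note four = integral_PiM_normal_four_product[OF \<sigma> fin mem(1)[OF that(1)] mem(1)[OF that(2)]
        mem(2)[OF that(1)] mem(2)[OF that(2)] disjoint[OF that(1,1)] disjoint[OF that(1,2)]
        disjoint[OF that(2,1)] disjoint[OF that(2,2)]]
    show "integrable ?P (\<lambda>\<omega>. \<omega> (p a) * \<omega> (p b) * \<omega> (q a) * \<omega> (q b))"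
      using four(1) .
    have "(p a = p b \<and> q a = q b) = (a = b)" using inj that unfolding inj_on_def by auto
    then show "(\<integral>\<omega>. \<omega> (p a) * \<omega> (p b) * \<omega> (q a) * \<omega> (q b) \<partial>?P) = (if a = b then \<sigma>^4 else 0)"
      using four(2) by (auto simp: power2_eq_square power4_eq_xxxx)
  qed
  show "integrable ?P (\<lambda>\<omega>. (\<Sum>a\<in>A. c a * (\<omega> (p a) * \<omega> (q a)))\<^sup>2)"
    unfolding expand by (intro Bochner_Integration.integrable_sum integrable_mult_right term_integrable)
  have "(\<integral>\<omega>. (\<Sum>a\<in>A. c a * (\<omega> (p a) * \<omega> (q a)))\<^sup>2 \<partial>?P)
     = (\<Sum>a\<in>A. \<Sum>b\<in>A. c a * c b * (\<integral>\<omega>. \<omega> (p a) * \<omega> (p b) * \<omega> (q a) * \<omega> (q b) \<partial>?P))"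
    unfolding expand using term_integrable by (simp add: integral_sum)
  also have "\<dots> = (\<Sum>a\<in>A. \<Sum>b\<in>A. c a * c b * (if a = b then \<sigma>^4 else 0))"
    using term_integral by (intro sum.cong refl) auto
  also have "\<dots> = \<sigma>^4 * (\<Sum>a\<in>A. (c a)\<^sup>2)"
    using finA by (simp add: if_distrib sum.delta sum_distrib_left power2_eq_square algebra_simps
        cong: if_cong)
  finally show "(\<integral>\<omega>. (\<Sum>a\<in>A. c a * (\<omega> (p a) * \<omega> (q a)))\<^sup>2 \<partial>?P) = \<sigma>^4 * (\<Sum>a\<in>A. (c a)\<^sup>2)" .
qed

lemma integral_PiM_normal_sqnorm_bilinear:
  fixes I :: "'i set" and A :: "'a set" and p q :: "nat \<Rightarrow> 'a \<Rightarrow> 'i" and c :: "'a \<Rightarrow> real"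
  assumes \<sigma>: "\<sigma> > 0" and fin: "finite I" and finA: "finite A"
    and mem: "\<And>i a. i < n \<Longrightarrow> a \<in> A \<Longrightarrow> p i a \<in> I" "\<And>i a. i < n \<Longrightarrow> a \<in> A \<Longrightarrow> q i a \<in> I"
    and disjoint: "\<And>i a b. i < n \<Longrightarrow> a \<in> A \<Longrightarrow> b \<in> A \<Longrightarrow> p i a \<noteq> q i b"
    and inj: "\<And>i. i < n \<Longrightarrow> inj_on (\<lambda>a. (p i a, q i a)) A"
  shows "(\<integral>\<omega>. sqnorm n (\<lambda>i. \<Sum>a\<in>A. c a * (\<omega> (p i a) * \<omega> (q i a))) \<partial>PiM I (\<lambda>_. normal_measure \<sigma>))
         = real n * \<sigma>^4 * (\<Sum>a\<in>A. (c a)\<^sup>2)"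
proof -
  note row = integral_PiM_normal_bilinear_square[OF \<sigma> fin finA mem disjoint inj]
  have "(\<integral>\<omega>. sqnorm n (\<lambda>i. \<Sum>a\<in>A. c a * (\<omega> (p i a) * \<omega> (q i a))) \<partial>PiM I (\<lambda>_. normal_measure \<sigma>))
      = (\<Sum>i<n. \<sigma>^4 * (\<Sum>a\<in>A. (c a)\<^sup>2))"
    unfolding sqnorm_def using row by (simp add: integral_sum)
  then show ?thesis by simp
qed

definition attn_shift :: "nat \<Rightarrow> nat \<Rightarrow> (nat \<Rightarrow> real) \<Rightarrow> nat \<Rightarrow> real" where
  "attn_shift N M a j =
     a j / (\<Sum>j'<N+M. a j') - (if j < N then a j / (\<Sum>j'<N. a j') else 0)"

lemma sum_squares_le_square_sum:
  fixes f :: "'a \<Rightarrow> real"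
  assumes "finite A" "\<And>j. j \<in> A \<Longrightarrow> f j \<ge> 0"
  shows "(\<Sum>j\<in>A. (f j)\<^sup>2) \<le> (\<Sum>j\<in>A. f j)\<^sup>2"
proof -
  have "(\<Sum>j\<in>A. (f j)\<^sup>2) \<le> (\<Sum>j\<in>A. f j * (\<Sum>j\<in>A. f j))"
    using assms by (intro sum_mono) (auto simp: power2_eq_square intro: mult_left_mono member_le_sum)
  then show ?thesis by (simp add: power2_eq_square sum_distrib_right)
qed

lemma sum_lessThan_add_split:
  fixes N M :: nat
  shows "(\<Sum>j<N+M. f j) = (\<Sum>j<N. f j) + (\<Sum>j\<in>{N..<N+M}. f j :: 'a :: comm_monoid_add)"
  using sum.atLeastLessThan_concat[where m=0 and n=N and p="N+M" and g=f]
  by (simp add: atLeast0LessThan)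

lemma attn_shift_sum_squares_le:
  fixes a :: "nat \<Rightarrow> real"
  assumes pos: "\<And>j. a j > 0" and new_le_old: "(\<Sum>j\<in>{N..<N+M}. a j) \<le> (\<Sum>j<N. a j)"
  shows "(\<Sum>j<N+M. (attn_shift N M a j)\<^sup>2) \<le> 1"
proof (cases "N = 0")
  case True
  then have "M = 0" using new_le_old pos sum_pos[of "{0..<M}" a] by fastforce
  then show ?thesis using True by simp
next
  case False
  define S where "S = (\<Sum>j<N. a j)"
  define T where "T = (\<Sum>j\<in>{N..<N+M}. a j)"
  have S: "S > 0" unfolding S_def using False pos by (intro sum_pos) auto
  have T: "T \<ge> 0" unfolding T_def using pos by (intro sum_nonneg) (auto intro: less_imp_le)
  have "T \<le> S" using new_le_old by (simp add: S_def T_def)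
  have total: "(\<Sum>j<N+M. a j) = S + T" by (simp add: sum_lessThan_add_split S_def T_def)
  \<comment> \<open>on the old slots \<open>\<alpha>'\<^sub>j = \<alpha>\<^sub>j S / (S + T)\<close>\<close>
  have old: "attn_shift N M a j = - (T / (S * (S + T))) * a j" if "j < N" for j
    using that S T unfolding attn_shift_def total S_def[symmetric] by (simp add: field_simps)
  have new: "attn_shift N M a j = a j / (S + T)" if "j \<ge> N" for j
    using that unfolding attn_shift_def total by simp
  have "(\<Sum>j<N+M. (attn_shift N M a j)\<^sup>2)
      = (T / (S * (S + T)))\<^sup>2 * (\<Sum>j<N. (a j)\<^sup>2) + (\<Sum>j\<in>{N..<N+M}. (a j)\<^sup>2) / (S + T)\<^sup>2"
    unfolding sum_lessThan_add_split
    by (simp add: old new power_mult_distrib power_divide sum_distrib_left sum_divide_distrib)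
  also have "\<dots> \<le> (T / (S * (S + T)))\<^sup>2 * S\<^sup>2 + T\<^sup>2 / (S + T)\<^sup>2"
    unfolding S_def T_def using pos
    by (intro add_mono mult_left_mono divide_right_mono sum_squares_le_square_sum)
      (auto intro: less_imp_le)
  also have "\<dots> = 2 * (T / (S + T))\<^sup>2"
    using S T by (simp add: power_divide power_mult_distrib)
  also have "\<dots> \<le> 1"
  proof -
    have "T / (S + T) \<le> 1 / 2" "0 \<le> T / (S + T)" using S T \<open>T \<le> S\<close> by (simp_all add: field_simps)
    then have "(T / (S + T))\<^sup>2 \<le> (1 / 2)\<^sup>2" by (intro power_mono)
    moreover have "(1 / 2 :: real)\<^sup>2 = 1 / 4" by (simp add: power2_eq_square)
    ultimately show ?thesis by linarith
  qed
  finally show ?thesis .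
qed

lemma hidden_diff:
  "hidden D p d W U Wc b hprev x c' i - hidden D p d W U Wc b hprev x c i
     = (\<Sum>k<d. Wc i k * (c' k - c k))"
  unfolding hidden_def matvec_def by (simp add: sum_subtractf[symmetric] right_diff_distrib)

lemma content_diff:
  "content (N+M) a m k - content N a m k = (\<Sum>j<N+M. attn_shift N M a j * m j k)"
proof -
  have "content N a m k = (\<Sum>j<N+M. (if j < N then a j / (\<Sum>j'<N. a j') else 0) * m j k)"
    unfolding content_def sum_lessThan_add_split[where N=N and M=M] by simp
  then show ?thesis
    unfolding attn_shift_def by (simp add: content_def left_diff_distrib sum_subtractf)
qed

lemma finite_rvars: "finite (rvars D d K)"
proof -
  have "rvars D d K \<subseteq> case_prod RWc ` ({..<D} \<times> {..<d}) \<union> case_prod RMv ` ({..<K} \<times> {..<d})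
     \<union> case_prod RWt ` ({..<D} \<times> {..<d}) \<union> RHt ` {..<d}"
    unfolding rvars_def by auto
  then show ?thesis by (rule finite_subset) auto
qed

lemma expected_memory_perturbation:
  assumes "\<sigma> > 0"
  shows "(\<integral>\<omega>. sqnorm D (\<lambda>i.
            hidden D p d W U (\<lambda>a k. \<omega> (RWc a k)) b hprev x (content (N+M) a (\<lambda>j k. \<omega> (RMv j k))) i
          - hidden D p d W U (\<lambda>a k. \<omega> (RWc a k)) b hprev x (content N a (\<lambda>j k. \<omega> (RMv j k))) i)
        \<partial>gauss_space \<sigma> (rvars D d (N+M)))
      = real D * \<sigma>^4 * (real d * (\<Sum>j<N+M. (attn_shift N M a j)\<^sup>2))"
proof -
  let ?A = "{..<d} \<times> {..<N+M}"
  have row: "hidden D p d W U (\<lambda>a k. \<omega> (RWc a k)) b hprev x (content (N+M) a (\<lambda>j k. \<omega> (RMv j k))) i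
          - hidden D p d W U (\<lambda>a k. \<omega> (RWc a k)) b hprev x (content N a (\<lambda>j k. \<omega> (RMv j k))) i
      = (\<Sum>z\<in>?A. attn_shift N M a (snd z) * (\<omega> (RWc i (fst z)) * \<omega> (RMv (snd z) (fst z))))" for \<omega> i
    unfolding hidden_diff content_diff
    by (simp add: sum.cartesian_product' sum_distrib_left algebra_simps)
  have "(\<Sum>z\<in>?A. (attn_shift N M a (snd z))\<^sup>2) = real d * (\<Sum>j<N+M. (attn_shift N M a j)\<^sup>2)"
    by (simp add: sum.cartesian_product')
  then show ?thesis
    unfolding row gauss_space_def
    by (subst integral_PiM_normal_sqnorm_bilinear[OF assms finite_rvars])
      (auto simp: rvars_def inj_on_def)
qed

lemma expected_hidden_perturbation:
  assumes "\<sigma> > 0"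
  shows "(\<integral>\<omega>. sqnorm D (\<lambda>i. matvec d (\<lambda>a k. \<omega> (RWt a k)) (\<lambda>k. \<omega> (RHt k)) i)
        \<partial>gauss_space \<sigma> (rvars D d K))
      = real D * \<sigma>^4 * real d"
  using integral_PiM_normal_sqnorm_bilinear[OF assms finite_rvars,
      of "{..<d}" D "\<lambda>i k. RWt i k" D d K "\<lambda>_ k. RHt k" "\<lambda>_. 1"]
  unfolding matvec_def gauss_space_def by (simp add: rvars_def inj_on_def)

theorem theorem1:
  fixes D d p N M :: nat
    and \<sigma> :: real
    and W :: "nat \<Rightarrow> nat \<Rightarrow> real" and U :: "nat \<Rightarrow> nat \<Rightarrow> real"
    and b hprev x :: "nat \<Rightarrow> real"
    and key :: "nat \<Rightarrow> nat \<Rightarrow> real"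
  assumes "\<sigma> > 0"
    and "(\<Sum>j\<in>{N..<N+M}. attn_tilde D hprev key j) \<le> (\<Sum>j<N. attn_tilde D hprev key j)"
  shows
    "(\<integral>\<omega>. sqnorm D (\<lambda>i.
          hidden D p d W U (\<lambda>a k. \<omega> (RWc a k)) b hprev x
            (content (N+M) (attn_tilde D hprev key) (\<lambda>j k. \<omega> (RMv j k))) i
        - hidden D p d W U (\<lambda>a k. \<omega> (RWc a k)) b hprev x
            (content N (attn_tilde D hprev key) (\<lambda>j k. \<omega> (RMv j k))) i)
      \<partial>gauss_space \<sigma> (rvars D d (N+M)))
   \<le> (\<integral>\<omega>. sqnorm D (\<lambda>i.
          (hidden D p d W U (\<lambda>a k. \<omega> (RWc a k)) b hprev x
             (content N (attn_tilde D hprev key) (\<lambda>j k. \<omega> (RMv j k))) i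
           + matvec d (\<lambda>a k. \<omega> (RWt a k)) (\<lambda>k. \<omega> (RHt k)) i)
        - hidden D p d W U (\<lambda>a k. \<omega> (RWc a k)) b hprev x
            (content N (attn_tilde D hprev key) (\<lambda>j k. \<omega> (RMv j k))) i)
      \<partial>gauss_space \<sigma> (rvars D d (N+M)))"
proof -
  have "(\<Sum>j<N+M. (attn_shift N M (attn_tilde D hprev key) j)\<^sup>2) \<le> 1"
    using assms(2) by (intro attn_shift_sum_squares_le) (simp_all add: attn_tilde_def)
  then show ?thesis
    unfolding expected_memory_perturbation[OF assms(1)] add_diff_cancel_left'
      expected_hidden_perturbation[OF assms(1)]
    using assms(1) by (intro mult_left_mono mult_left_le) simp_all
qed

end
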